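(* Let $S$ be an additively reduced semidomain and $G$ a torsion-free abelian group, totally ordered compatibly with addition, in which every subset that is bounded below is well-ordered. Let $f=\sum_{i=0}^\infty s_ix^{g_i}\in S[\![G]\!]$ with $s_i\neq0$ for all $i\in\mathbb{N}_0$. If for some $N\in\mathbb{N}_0$ the sequence $(g_{N+i+1}-g_{N+i})_{i\in\mathbb{N}_0}$ is strictly increasing, then $f$ is monolithic.
   Context: A semidomain is a subsemiring (containing $0$ and $1$) of an integral domain. $S$ is additively reduced if $0$ is the only invertible element of $(S,+)$. $S[\![G]\!]=\{\sum_{i=0}^\infty s_ix^{g_i} : s_i\in S,\ g_i\in G,\ g_i<g_{i+1}\}$ (with respect to the given order on $G$) with operations defined as for polynomials. A nonzero $f$ is monolithic if $f=pq$ with $p,q\in S[\![G]\!]$ implies one of $p,q$ is a monomial $sx^g$. *)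

theory Defs
  imports Main
begin

definition semidomain :: "'a::idom set \<Rightarrow> bool" where
  "semidomain S \<longleftrightarrow> 0 \<in> S \<and> 1 \<in> S \<and>
     (\<forall>x\<in>S. \<forall>y\<in>S. x + y \<in> S \<and> x * y \<in> S)"

definition additively_reduced :: "'a::idom set \<Rightarrow> bool" where
  "additively_reduced S \<longleftrightarrow> (\<forall>x\<in>S. (\<exists>y\<in>S. x + y = 0) \<longrightarrow> x = 0)"

definition bdd_below_well_ordered :: "'g::linorder itself \<Rightarrow> bool" where
  "bdd_below_well_ordered _ \<longleftrightarrow>
     (\<forall>A::'g set. bdd_below A \<longrightarrow>
        (\<forall>B\<subseteq>A. B \<noteq> {} \<longrightarrow> (\<exists>m\<in>B. \<forall>b\<in>B. m \<le> b)))"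

text \<open>Elements of S[[G]] are represented by their coefficient functions G \<Rightarrow> A.\<close>
definition gen_series :: "'a::idom set \<Rightarrow> ('g::linorder \<Rightarrow> 'a) set" where
  "gen_series S = {f. (\<forall>h. f h \<in> S) \<and>
      (finite {h. f h \<noteq> 0} \<or> (\<exists>g::nat \<Rightarrow> 'g. strict_mono g \<and> {h. f h \<noteq> 0} \<subseteq> range g))}"

definition series_mult :: "('g::ab_group_add \<Rightarrow> 'a::idom) \<Rightarrow> ('g \<Rightarrow> 'a) \<Rightarrow> 'g \<Rightarrow> 'a" where
  "series_mult p q = (\<lambda>c. \<Sum>a\<in>{a. p a \<noteq> 0 \<and> q (c - a) \<noteq> 0}. p a * q (c - a))"

definition is_monomial :: "('g \<Rightarrow> 'a::zero) \<Rightarrow> bool" where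
  "is_monomial p \<longleftrightarrow> (\<exists>g. \<forall>h. h \<noteq> g \<longrightarrow> p h = 0)"

definition monolithic :: "'a::idom set \<Rightarrow> ('g::{linorder,ab_group_add} \<Rightarrow> 'a) \<Rightarrow> bool" where
  "monolithic S f \<longleftrightarrow> f \<noteq> (\<lambda>_. 0) \<and>
     (\<forall>p\<in>gen_series S. \<forall>q\<in>gen_series S. f = series_mult p q \<longrightarrow> is_monomial p \<or> is_monomial q)"

end

theory Submission
  imports Defs
begin

text \<open>Suppose \<open>f = p q\<close> with neither factor a monomial. Since \<open>S\<close> is additively reduced,
  no cancellation occurs in products, so every sum \<open>b + c\<close> of support points of \<open>p\<close> and \<open>q\<close>
  is an exponent \<open>g\<^sub>j\<close> of \<open>f\<close>, and one of the supports, say that of \<open>q\<close>, must be infinite.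
  Fix \<open>b\<^sub>0 < b\<^sub>1\<close> in the support of \<open>p\<close>. For each \<open>c\<close> in the support of \<open>q\<close>, both
  \<open>b\<^sub>0 + c\<close> and \<open>b\<^sub>1 + c\<close> are exponents of \<open>f\<close> at distance \<open>b\<^sub>1 - b\<^sub>0\<close>. But the gaps of an
  eventually strictly increasing gap sequence exceed any bound eventually, because \<open>G\<close> has no
  bounded strictly increasing sequences; so only finitely many \<open>c\<close> are possible.\<close>

lemma strict_mono_unbounded:
  fixes h :: "nat \<Rightarrow> 'g::linordered_ab_group_add"
  assumes wo: "bdd_below_well_ordered TYPE('g)" and mono: "strict_mono h"
  shows "\<exists>n. U < h n"
proof (rule ccontr)
  assume "\<nexists>n. U < h n"
  then have bounded: "h n \<le> U" for n by (simp add: not_less)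
  let ?B = "range (\<lambda>n. U - h n)"
  have "bdd_below ?B" using bounded by (auto simp: bdd_below_def intro!: exI[of _ 0])
  with wo have "\<exists>m\<in>?B. \<forall>b\<in>?B. m \<le> b" unfolding bdd_below_well_ordered_def by blast
  then obtain n where least: "\<forall>b\<in>?B. U - h n \<le> b" by blast
  then have "U - h n \<le> U - h (Suc n)" by blast
  moreover have "h n < h (Suc n)" using mono by (simp add: strict_mono_def)
  ultimately show False by simp
qed

lemma strict_mono_finite_le:
  fixes h :: "nat \<Rightarrow> 'g::linordered_ab_group_add"
  assumes "bdd_below_well_ordered TYPE('g)" and mono: "strict_mono h"
  shows "finite {n. h n \<le> U}"
proof -
  obtain n where "U < h n" using strict_mono_unbounded assms by blast
  then have "{m. h m \<le> U} \<subseteq> {..<n}"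
    using mono by (auto simp: strict_mono_less[symmetric])
  then show ?thesis by (rule finite_subset) simp
qed

lemma strict_mono_gaps_eventually_gt:
  fixes g :: "nat \<Rightarrow> 'g::linordered_ab_group_add"
  assumes wo: "bdd_below_well_ordered TYPE('g)" and mono: "strict_mono g"
    and gaps: "strict_mono (\<lambda>i. g (N + i + 1) - g (N + i))"
  shows "\<exists>K. \<forall>j j'. K \<le> j \<longrightarrow> j < j' \<longrightarrow> \<delta> < g j' - g j"
proof -
  obtain M where M: "\<delta> < g (N + M + 1) - g (N + M)"
    using strict_mono_unbounded[OF wo gaps] by blast
  have "\<delta> < g j' - g j" if "N + M \<le> j" "j < j'" for j j'
  proof -
    have "M \<le> j - N" using \<open>N + M \<le> j\<close> by simp
    then have "g (N + M + 1) - g (N + M) \<le> g (N + (j - N) + 1) - g (N + (j - N))"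
      by (rule strict_mono_less_eq[OF gaps, THEN iffD2])
    also have "\<dots> = g (j + 1) - g j" using \<open>N + M \<le> j\<close> by simp
    also have "\<dots> \<le> g j' - g j"
      using mono \<open>j < j'\<close> by (simp add: strict_mono_less_eq)
    finally show ?thesis using M by simp
  qed
  then show ?thesis by blast
qed

lemma gen_series_support_bdd_below:
  fixes p :: "'g::linorder \<Rightarrow> 'a::idom"
  assumes "p \<in> gen_series S"
  shows "bdd_below {h. p h \<noteq> 0}"
  using assms unfolding gen_series_def
proof (elim CollectE conjE disjE exE)
  fix g :: "nat \<Rightarrow> 'g"
  assume "strict_mono g" and "{h. p h \<noteq> 0} \<subseteq> range g"
  then show ?thesis
    by (auto simp: bdd_below_def strict_mono_less_eq intro!: exI[of _ "g 0"])
qed (auto simp: bdd_below_def intro!: exI[of _ "Min {h. p h \<noteq> 0}"])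

lemma gen_series_finite_support_le:
  fixes p :: "'g::linordered_ab_group_add \<Rightarrow> 'a::idom"
  assumes wo: "bdd_below_well_ordered TYPE('g)" and "p \<in> gen_series S"
  shows "finite {h. p h \<noteq> 0 \<and> h \<le> U}"
  using assms(2) unfolding gen_series_def
proof (elim CollectE conjE disjE exE)
  fix g :: "nat \<Rightarrow> 'g"
  assume "strict_mono g" and "{h. p h \<noteq> 0} \<subseteq> range g"
  then have "{h. p h \<noteq> 0 \<and> h \<le> U} \<subseteq> g ` {n. g n \<le> U}" by auto
  then show ?thesis
    using strict_mono_finite_le[OF wo \<open>strict_mono g\<close>] by (meson finite_imageI finite_subset)
qed (simp add: finite_subset)

lemma series_mult_finite_terms:
  fixes p q :: "'g::linordered_ab_group_add \<Rightarrow> 'a::idom"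
  assumes wo: "bdd_below_well_ordered TYPE('g)"
    and p: "p \<in> gen_series S" and q: "q \<in> gen_series S"
  shows "finite {a. p a \<noteq> 0 \<and> q (c - a) \<noteq> 0}"
proof -
  obtain m where m: "\<And>b. q b \<noteq> 0 \<Longrightarrow> m \<le> b"
    using gen_series_support_bdd_below[OF q] by (auto simp: bdd_below_def)
  have "{a. p a \<noteq> 0 \<and> q (c - a) \<noteq> 0} \<subseteq> {a. p a \<noteq> 0 \<and> a \<le> c - m}"
    using m by (force simp: algebra_simps)
  then show ?thesis using gen_series_finite_support_le[OF wo p] by (rule finite_subset)
qed

lemma semidomain_sum_mem:
  assumes "semidomain S" and "\<And>x. x \<in> F \<Longrightarrow> t x \<in> S"
  shows "sum t F \<in> S"
  using assms(2)
proof (induction F rule: infinite_finite_induct)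
  case (insert x F)
  then show ?case using assms(1) unfolding semidomain_def by auto
qed (use assms(1) in \<open>auto simp: semidomain_def\<close>)

lemma additively_reduced_sum_neq_zero:
  assumes sd: "semidomain S" and ar: "additively_reduced S"
    and "finite F" "x \<in> F" "t x \<noteq> 0" and mem: "\<And>y. y \<in> F \<Longrightarrow> t y \<in> S"
  shows "sum t F \<noteq> 0"
proof
  assume "sum t F = 0"
  then have "t x + sum t (F - {x}) = 0"
    using sum.remove[OF \<open>finite F\<close> \<open>x \<in> F\<close>, of t] by simp
  moreover have "sum t (F - {x}) \<in> S" by (rule semidomain_sum_mem[OF sd]) (use mem in blast)
  ultimately have "t x = 0" using ar mem[OF \<open>x \<in> F\<close>] unfolding additively_reduced_def by blast
  with \<open>t x \<noteq> 0\<close> show False ..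
qed

lemma series_mult_neq_zero:
  fixes p q :: "'g::linordered_ab_group_add \<Rightarrow> 'a::idom"
  assumes wo: "bdd_below_well_ordered TYPE('g)"
    and sd: "semidomain S" and ar: "additively_reduced S"
    and p: "p \<in> gen_series S" and q: "q \<in> gen_series S"
    and "p b \<noteq> 0" "q c \<noteq> 0"
  shows "series_mult p q (b + c) \<noteq> 0"
  unfolding series_mult_def
proof (rule additively_reduced_sum_neq_zero[OF sd ar])
  show "finite {a. p a \<noteq> 0 \<and> q (b + c - a) \<noteq> 0}"
    by (rule series_mult_finite_terms[OF wo p q])
  show "b \<in> {a. p a \<noteq> 0 \<and> q (b + c - a) \<noteq> 0}" "p b * q (b + c - b) \<noteq> 0"
    using \<open>p b \<noteq> 0\<close> \<open>q c \<noteq> 0\<close> by simp_all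
  have "p a \<in> S" "q a \<in> S" for a using p q unfolding gen_series_def by auto
  then show "p a * q (b + c - a) \<in> S" for a
    using sd unfolding semidomain_def by blast
qed

lemma series_mult_support_subset:
  "{h. series_mult p q h \<noteq> 0} \<subseteq> (\<lambda>(a, b). a + b) ` ({a. p a \<noteq> 0} \<times> {b. q b \<noteq> 0})"
proof
  fix h assume "h \<in> {h. series_mult p q h \<noteq> 0}"
  then have "series_mult p q h \<noteq> 0" by simp
  then have "{a. p a \<noteq> 0 \<and> q (h - a) \<noteq> 0} \<noteq> {}"
    unfolding series_mult_def by (metis sum.empty)
  then obtain a where "(a, h - a) \<in> {a. p a \<noteq> 0} \<times> {b. q b \<noteq> 0}" by blast
  then show "h \<in> (\<lambda>(a, b). a + b) ` ({a. p a \<noteq> 0} \<times> {b. q b \<noteq> 0})"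
    by (rule image_eqI[rotated]) simp
qed

lemma finite_if_translates_in_range:
  fixes g :: "nat \<Rightarrow> 'g::linordered_ab_group_add"
  assumes mono: "strict_mono g" and "b\<^sub>0 < b\<^sub>1"
    and gaps: "\<forall>j j'. K \<le> j \<longrightarrow> j < j' \<longrightarrow> b\<^sub>1 - b\<^sub>0 < g j' - g j"
    and translates: "\<And>c. c \<in> C \<Longrightarrow> b\<^sub>0 + c \<in> range g \<and> b\<^sub>1 + c \<in> range g"
  shows "finite C"
proof -
  have "C \<subseteq> (\<lambda>j. g j - b\<^sub>0) ` {..<K}"
  proof
    fix c assume "c \<in> C"
    then obtain j j' where j: "b\<^sub>0 + c = g j" and j': "b\<^sub>1 + c = g j'"
      using translates by (metis rangeE)
    have "g j < g j'" using j j' \<open>b\<^sub>0 < b\<^sub>1\<close> by (metis add_strict_right_mono)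
    then have "j < j'" using mono by (simp add: strict_mono_less)
    moreover have "g j' - g j = b\<^sub>1 - b\<^sub>0" using j j' by (metis add_diff_cancel_right)
    ultimately have "j < K" using gaps by (metis less_irrefl not_le)
    then show "c \<in> (\<lambda>j. g j - b\<^sub>0) ` {..<K}"
      using j by (intro image_eqI[where x=j]) (auto simp: algebra_simps)
  qed
  then show ?thesis by (rule finite_subset) simp
qed

lemma not_monomial_obtains_two_support_points:
  fixes p :: "'g::linorder \<Rightarrow> 'a::zero"
  assumes "\<not> is_monomial p"
  obtains b\<^sub>0 b\<^sub>1 where "p b\<^sub>0 \<noteq> 0" "p b\<^sub>1 \<noteq> 0" "b\<^sub>0 < b\<^sub>1"
proof -
  obtain b where "p b \<noteq> 0" using assms unfolding is_monomial_def by blast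
  moreover obtain b' where "b' \<noteq> b" "p b' \<noteq> 0" using assms unfolding is_monomial_def by blast
  ultimately show thesis using that by (metis linorder_neqE)
qed

lemma finite_support_of_cofactor:
  fixes g :: "nat \<Rightarrow> 'g::linordered_ab_group_add" and p q :: "'g \<Rightarrow> 'a::zero"
  assumes wo: "bdd_below_well_ordered TYPE('g)" and mono: "strict_mono g"
    and gaps: "strict_mono (\<lambda>i. g (N + i + 1) - g (N + i))"
    and "\<not> is_monomial p"
    and sums: "\<And>b c. p b \<noteq> 0 \<Longrightarrow> q c \<noteq> 0 \<Longrightarrow> b + c \<in> range g"
  shows "finite {c. q c \<noteq> 0}"
proof -
  obtain b\<^sub>0 b\<^sub>1 where b: "p b\<^sub>0 \<noteq> 0" "p b\<^sub>1 \<noteq> 0" "b\<^sub>0 < b\<^sub>1"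
    using not_monomial_obtains_two_support_points \<open>\<not> is_monomial p\<close> by blast
  obtain K where "\<forall>j j'. K \<le> j \<longrightarrow> j < j' \<longrightarrow> b\<^sub>1 - b\<^sub>0 < g j' - g j"
    using strict_mono_gaps_eventually_gt[OF wo mono gaps] by blast
  moreover have "b\<^sub>0 + c \<in> range g \<and> b\<^sub>1 + c \<in> range g" if "c \<in> {c. q c \<noteq> 0}" for c
    using sums b that by simp
  ultimately show ?thesis using finite_if_translates_in_range[OF mono \<open>b\<^sub>0 < b\<^sub>1\<close>] by blast
qed

theorem corollary4p5:
  fixes S :: "'a::idom set"
    and s :: "nat \<Rightarrow> 'a"
    and g :: "nat \<Rightarrow> 'g::linordered_ab_group_add"
    and f :: "'g \<Rightarrow> 'a"
  assumes "semidomain S"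
    and "additively_reduced S"
    and "\<forall>(n::nat) (x::'g). n > 0 \<longrightarrow> (\<Sum>_<n. x) = 0 \<longrightarrow> x = 0"
    and "bdd_below_well_ordered TYPE('g)"
    and "\<forall>i. s i \<in> S \<and> s i \<noteq> 0"
    and "strict_mono g"
    and "f = (\<lambda>h. if h \<in> range g then s (THE i. g i = h) else 0)"
    and "\<exists>N. strict_mono (\<lambda>i. g (N + i + 1) - g (N + i))"
  shows "monolithic S f"
proof -
  have support_f: "{h. f h \<noteq> 0} = range g" using assms(5,7) by auto
  obtain N where gaps: "strict_mono (\<lambda>i. g (N + i + 1) - g (N + i))" using assms(8) by blast
  show ?thesis
    unfolding monolithic_def
  proof (intro conjI ballI impI)
    show "f \<noteq> (\<lambda>_. 0)" using support_f by auto
  next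
    fix p q assume p: "p \<in> gen_series S" and q: "q \<in> gen_series S" and f: "f = series_mult p q"
    have sums: "b + c \<in> range g" if "p b \<noteq> 0" "q c \<noteq> 0" for b c
      using series_mult_neq_zero[OF assms(4,1,2) p q that] support_f f by blast
    have "infinite (range g)"
      using assms(6) strict_mono_imp_inj_on finite_imageD infinite_UNIV_nat by blast
    then have "infinite ({a. p a \<noteq> 0} \<times> {b. q b \<noteq> 0})"
      using series_mult_support_subset[of p q] support_f f by (metis finite_imageI finite_subset)
    moreover have "is_monomial p \<or> finite {c. q c \<noteq> 0}" "is_monomial q \<or> finite {c. p c \<noteq> 0}"
      using finite_support_of_cofactor[OF assms(4,6) gaps] sums by (metis add.commute)+
    ultimately show "is_monomial p \<or> is_monomial q" by auto
  qed
qed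

end
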